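(* Let $\eta,\epsilon>0$ and let $\mu$ be a distribution over $\{-1,+1\}^n$. If $\mu$ is $(\eta,\epsilon)$-completely spectrally independent, then $\mu$ has $(\eta+1,\epsilon)$-complete limited correlation.
   Context: For a distribution $\nu$ on $\{-1,+1\}^n$: $\Omega(\nu)$ support, $\nu_\Lambda$ marginal, $\nu^\sigma$ conditional given $\sigma\in\Omega(\nu_\Lambda)$, $\nu^{\sigma\wedge i\gets x}$ further conditioned on coordinate $i$ equal $x$; $\nu^{i\gets x}$ conditioned only on coordinate $i$ equal $x$. $(\boldsymbol\lambda*\nu)(\sigma)\propto\nu(\sigma)\prod_{i:\sigma_i=+1}\lambda_i$. Spectral independence: $\nu$ is $\eta$-spectrally independent if for all $\Lambda$, $\sigma\in\Omega(\nu_\Lambda)$, the spectral radius of $\Psi_{\nu^\sigma}(i,j)=\max_{x,y\in\Omega(\nu^\sigma_i)}d_{\mathrm{TV}}(\nu_j^{\sigma\wedge i\gets x},\nu_j^{\sigma\wedge i\gets y})$ is $\le\eta$; $(\eta,\epsilon)$-completely spectrally independent if $(\boldsymbol\lambda*\nu)$ is $\eta$-spectrally independent for all $\boldsymbol\lambda\in(0,1+\epsilon]^n$. Correlation matrix: $\Psi^{\mathrm{Cor}}_\nu(i,i)=\nu_i(-1)$; for $i\ne j$, $\Psi^{\mathrm{Cor}}_\nu(i,j)=\nu_j^{i\gets+1}(+1)-\nu_j(+1)$ if $+1\in\Omega(\nu_i)$ and $0$ otherwise. Absolute correlation matrix: $\Psi^{\mathrm{AbsCor}}_\nu(i,j)=|\Psi^{\mathrm{Cor}}_\nu(i,j)|$.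 $\nu$ has $\eta$-limited correlation if for all $\Lambda$, $\sigma\in\Omega(\nu_\Lambda)$, the spectral radius of $\Psi^{\mathrm{AbsCor}}_{\nu^\sigma}$ is $\le\eta$; it has $(\eta,\epsilon)$-complete limited correlation if $(\boldsymbol\lambda*\nu)$ has $\eta$-limited correlation for all $\boldsymbol\lambda\in(0,1+\epsilon]^n$. *)

theory Defs
  imports "HOL-Library.FuncSet" "Jordan_Normal_Form.Spectral_Radius"
begin

definition cube :: "nat set \<Rightarrow> (nat \<Rightarrow> int) set" where
  "cube V = PiE V (\<lambda>_. {-1, 1})"

definition is_dist :: "nat set \<Rightarrow> ((nat \<Rightarrow> int) \<Rightarrow> real) \<Rightarrow> bool" where
  "is_dist V \<nu> \<longleftrightarrow> (\<forall>\<sigma>\<in>cube V. 0 \<le> \<nu> \<sigma>) \<and> (\<Sum>\<sigma>\<in>cube V. \<nu> \<sigma>) = 1"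

definition marg :: "nat set \<Rightarrow> ((nat \<Rightarrow> int) \<Rightarrow> real) \<Rightarrow> nat set \<Rightarrow> (nat \<Rightarrow> int) \<Rightarrow> real" where
  "marg V \<nu> \<Lambda> \<tau> = (\<Sum>\<sigma>\<in>cube V. if restrict \<sigma> \<Lambda> = \<tau> then \<nu> \<sigma> else 0)"

definition merge :: "nat set \<Rightarrow> (nat \<Rightarrow> int) \<Rightarrow> (nat \<Rightarrow> int) \<Rightarrow> (nat \<Rightarrow> int)" where
  "merge \<Lambda> \<tau> \<rho> = (\<lambda>i. if i \<in> \<Lambda> then \<tau> i else \<rho> i)"

definition cond :: "nat set \<Rightarrow> ((nat \<Rightarrow> int) \<Rightarrow> real) \<Rightarrow> nat set \<Rightarrow> (nat \<Rightarrow> int)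
    \<Rightarrow> ((nat \<Rightarrow> int) \<Rightarrow> real)" where
  "cond V \<nu> \<Lambda> \<tau> = (\<lambda>\<rho>. \<nu> (merge \<Lambda> \<tau> \<rho>) / marg V \<nu> \<Lambda> \<tau>)"

definition pt :: "nat \<Rightarrow> int \<Rightarrow> (nat \<Rightarrow> int)" where
  "pt i x = (\<lambda>k\<in>{i}. x)"

definition marg1 :: "nat set \<Rightarrow> ((nat \<Rightarrow> int) \<Rightarrow> real) \<Rightarrow> nat \<Rightarrow> int \<Rightarrow> real" where
  "marg1 V \<nu> i x = marg V \<nu> {i} (pt i x)"

definition cond1 :: "nat set \<Rightarrow> ((nat \<Rightarrow> int) \<Rightarrow> real) \<Rightarrow> nat \<Rightarrow> int \<Rightarrow> ((nat \<Rightarrow> int) \<Rightarrow> real)" where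
  "cond1 V \<nu> i x = cond V \<nu> {i} (pt i x)"

definition supp1 :: "nat set \<Rightarrow> ((nat \<Rightarrow> int) \<Rightarrow> real) \<Rightarrow> nat \<Rightarrow> int set" where
  "supp1 V \<nu> i = {x \<in> {-1, 1}. 0 < marg1 V \<nu> i x}"

definition dtv_j :: "nat set \<Rightarrow> ((nat \<Rightarrow> int) \<Rightarrow> real) \<Rightarrow> nat \<Rightarrow> int \<Rightarrow> int \<Rightarrow> nat \<Rightarrow> real" where
  "dtv_j V \<nu> i x y j = (1/2) * (\<Sum>z\<in>{-1, 1::int}.
      \<bar>marg1 (V - {i}) (cond1 V \<nu> i x) j z - marg1 (V - {i}) (cond1 V \<nu> i y) j z\<bar>)"

text \<open>Influence matrix Psi_nu (diagonal entries 0, as coordinate i is not a coordinate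
  of nu^{i<-x}).\<close>
definition infl :: "nat set \<Rightarrow> ((nat \<Rightarrow> int) \<Rightarrow> real) \<Rightarrow> nat \<Rightarrow> nat \<Rightarrow> real" where
  "infl V \<nu> i j = (if i = j then 0 else
      Max {dtv_j V \<nu> i x y j | x y. x \<in> supp1 V \<nu> i \<and> y \<in> supp1 V \<nu> i})"

definition cor :: "nat set \<Rightarrow> ((nat \<Rightarrow> int) \<Rightarrow> real) \<Rightarrow> nat \<Rightarrow> nat \<Rightarrow> real" where
  "cor V \<nu> i j = (if i = j then marg1 V \<nu> i (-1)
      else if 1 \<in> supp1 V \<nu> i then marg1 (V - {i}) (cond1 V \<nu> i 1) j 1 - marg1 V \<nu> j 1
      else 0)"

definition abscor :: "nat set \<Rightarrow> ((nat \<Rightarrow> int) \<Rightarrow> real) \<Rightarrow> nat \<Rightarrow> nat \<Rightarrow> real" where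
  "abscor V \<nu> i j = \<bar>cor V \<nu> i j\<bar>"

text \<open>Spectral radius of a V x V real matrix (V finite), via the library notion on
  complex matrices; the empty matrix has spectral radius 0.\<close>
definition to_mat :: "nat set \<Rightarrow> (nat \<Rightarrow> nat \<Rightarrow> real) \<Rightarrow> complex mat" where
  "to_mat V M = mat (card V) (card V)
     (\<lambda>(a, b). complex_of_real (M (sorted_list_of_set V ! a) (sorted_list_of_set V ! b)))"

definition spec_rad :: "nat set \<Rightarrow> (nat \<Rightarrow> nat \<Rightarrow> real) \<Rightarrow> real" where
  "spec_rad V M = (if V = {} then 0 else spectral_radius (to_mat V M))"

definition tilt :: "nat set \<Rightarrow> (nat \<Rightarrow> real) \<Rightarrow> ((nat \<Rightarrow> int) \<Rightarrow> real) \<Rightarrow> ((nat \<Rightarrow> int) \<Rightarrow> real)" where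
  "tilt V lam \<nu> = (\<lambda>\<sigma>. \<nu> \<sigma> * (\<Prod>i\<in>{i\<in>V. \<sigma> i = 1}. lam i) /
      (\<Sum>\<sigma>'\<in>cube V. \<nu> \<sigma>' * (\<Prod>i\<in>{i\<in>V. \<sigma>' i = 1}. lam i)))"

definition spectrally_independent :: "real \<Rightarrow> nat set \<Rightarrow> ((nat \<Rightarrow> int) \<Rightarrow> real) \<Rightarrow> bool" where
  "spectrally_independent \<eta> V \<nu> \<longleftrightarrow>
     (\<forall>\<Lambda>\<subseteq>V. \<forall>\<tau>\<in>cube \<Lambda>. 0 < marg V \<nu> \<Lambda> \<tau> \<longrightarrow>
        spec_rad (V - \<Lambda>) (infl (V - \<Lambda>) (cond V \<nu> \<Lambda> \<tau>)) \<le> \<eta>)"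

definition completely_SI :: "real \<Rightarrow> real \<Rightarrow> nat set \<Rightarrow> ((nat \<Rightarrow> int) \<Rightarrow> real) \<Rightarrow> bool" where
  "completely_SI \<eta> \<epsilon> V \<nu> \<longleftrightarrow>
     (\<forall>lam. (\<forall>i\<in>V. 0 < lam i \<and> lam i \<le> 1 + \<epsilon>) \<longrightarrow> spectrally_independent \<eta> V (tilt V lam \<nu>))"

definition limited_correlation :: "real \<Rightarrow> nat set \<Rightarrow> ((nat \<Rightarrow> int) \<Rightarrow> real) \<Rightarrow> bool" where
  "limited_correlation \<eta> V \<nu> \<longleftrightarrow>
     (\<forall>\<Lambda>\<subseteq>V. \<forall>\<tau>\<in>cube \<Lambda>. 0 < marg V \<nu> \<Lambda> \<tau> \<longrightarrow>
        spec_rad (V - \<Lambda>) (abscor (V - \<Lambda>) (cond V \<nu> \<Lambda> \<tau>)) \<le> \<eta>)"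

definition complete_limited_correlation :: "real \<Rightarrow> real \<Rightarrow> nat set \<Rightarrow> ((nat \<Rightarrow> int) \<Rightarrow> real) \<Rightarrow> bool" where
  "complete_limited_correlation \<eta> \<epsilon> V \<nu> \<longleftrightarrow>
     (\<forall>lam. (\<forall>i\<in>V. 0 < lam i \<and> lam i \<le> 1 + \<epsilon>) \<longrightarrow> limited_correlation \<eta> V (tilt V lam \<nu>))"

end

theory Submission
  imports Defs
begin

(* Fix a tilt and a pinning, and let nu be the resulting conditional distribution.
   Entrywise, the absolute correlation matrix of nu is dominated by I + Psi_nu: the diagonal
   entries are probabilities, and off the diagonal the law of total probability gives
   Cor(i,j) = nu_i(-1) * (nu_j^{i<-+1}(+1) - nu_j^{i<--1}(+1)), whose absolute value is at most
   the total variation distance between the two conditional marginals of coordinate j.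
   The spectral radius is monotone under entrywise domination by a nonnegative matrix, and
   adding the identity raises it by at most 1. *)

definition entrywise_dominated :: "nat \<Rightarrow> complex mat \<Rightarrow> complex mat \<Rightarrow> bool" where
  "entrywise_dominated n A B \<longleftrightarrow>
     (\<forall>i<n. \<forall>j<n. Im (B $$ (i, j)) = 0 \<and> norm (A $$ (i, j)) \<le> Re (B $$ (i, j)))"

lemma entrywise_dominated_mult:
  assumes carrier: "A \<in> carrier_mat n n" "B \<in> carrier_mat n n" "C \<in> carrier_mat n n" "D \<in> carrier_mat n n"
    and AB: "entrywise_dominated n A B" and CD: "entrywise_dominated n C D"
  shows "entrywise_dominated n (A * C) (B * D)"
  unfolding entrywise_dominated_def
proof (intro allI impI)
  fix i j assume i: "i < n" and j: "j < n"
  have AC: "(A * C) $$ (i, j) = (\<Sum>l<n. A $$ (i, l) * C $$ (l, j))"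
   and BD: "(B * D) $$ (i, j) = (\<Sum>l<n. B $$ (i, l) * D $$ (l, j))"
    using carrier i j by (simp_all add: scalar_prod_def lessThan_atLeast0)
  have real: "Im (B $$ (i, l)) = 0" "Im (D $$ (l, j)) = 0" if "l < n" for l
    using AB CD i j that unfolding entrywise_dominated_def by auto
  have "norm ((A * C) $$ (i, j)) \<le> (\<Sum>l<n. norm (A $$ (i, l)) * norm (C $$ (l, j)))"
    unfolding AC by (rule order_trans[OF norm_sum]) (simp add: norm_mult)
  also have "\<dots> \<le> (\<Sum>l<n. Re (B $$ (i, l)) * Re (D $$ (l, j)))"
    using AB CD i j unfolding entrywise_dominated_def
    by (intro sum_mono mult_mono) (auto intro: order_trans[OF norm_ge_zero])
  also have "\<dots> = Re ((B * D) $$ (i, j))"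
    unfolding BD Re_sum using real by simp
  finally show "Im ((B * D) $$ (i, j)) = 0 \<and> norm ((A * C) $$ (i, j)) \<le> Re ((B * D) $$ (i, j))"
    unfolding BD Im_sum using real by simp
qed

lemma entrywise_dominated_pow:
  assumes "A \<in> carrier_mat n n" "B \<in> carrier_mat n n" and "entrywise_dominated n A B"
  shows "entrywise_dominated n (A ^\<^sub>m k) (B ^\<^sub>m k)"
proof (induction k)
  case 0
  show ?case using assms(1,2) unfolding entrywise_dominated_def by auto
next
  case (Suc k)
  then show ?case using assms by (simp add: entrywise_dominated_mult)
qed

lemma entrywise_dominated_smult:
  assumes "A \<in> carrier_mat n n" "B \<in> carrier_mat n n" and "entrywise_dominated n A B" and "0 \<le> c"
  shows "entrywise_dominated n (of_real c \<cdot>\<^sub>m A) (of_real c \<cdot>\<^sub>m B)"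
  using assms unfolding entrywise_dominated_def by (simp add: norm_mult mult_left_mono)

lemma eigenvalue_smult:
  assumes "A \<in> carrier_mat n n" and "eigenvalue A e"
  shows "eigenvalue (k \<cdot>\<^sub>m A) (k * e)"
proof -
  obtain v where v: "v \<in> carrier_vec n" "v \<noteq> 0\<^sub>v n" "A *\<^sub>v v = e \<cdot>\<^sub>v v"
    using assms unfolding eigenvalue_def eigenvector_def by auto
  have "(k \<cdot>\<^sub>m A) *\<^sub>v v = k \<cdot>\<^sub>v (A *\<^sub>v v)"
    using assms(1) v(1) by (auto intro!: eq_vecI simp: scalar_prod_def sum_distrib_left mult.assoc)
  also have "\<dots> = (k * e) \<cdot>\<^sub>v v"
    unfolding v(3) by (simp add: smult_smult_assoc)
  finally have "(k \<cdot>\<^sub>m A) *\<^sub>v v = (k * e) \<cdot>\<^sub>v v" .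
  then show ?thesis
    using assms(1) v unfolding eigenvalue_def eigenvector_def by auto
qed

lemma spectral_radius_smult:
  assumes A: "A \<in> carrier_mat n n" and n: "0 < n" and c: "0 < c"
  shows "spectral_radius (of_real c \<cdot>\<^sub>m A) = c * spectral_radius A"
proof (rule antisym)
  have cA: "of_real c \<cdot>\<^sub>m A \<in> carrier_mat n n" using A by simp
  obtain e where e: "eigenvalue (of_real c \<cdot>\<^sub>m A) e" "norm e = spectral_radius (of_real c \<cdot>\<^sub>m A)"
    using spectral_radius_mem_max(1)[OF cA n] unfolding spectrum_def by auto
  have "of_real (1 / c) \<cdot>\<^sub>m (of_real c \<cdot>\<^sub>m A) = A"
    using A c by (auto intro!: eq_matI)
  then have "eigenvalue A (of_real (1 / c) * e)"
    using eigenvalue_smult[OF cA e(1), of "of_real (1 / c)"] by simp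
  then have "norm (of_real (1 / c) * e) \<le> spectral_radius A"
    using spectral_radius_mem_max(2)[OF A n] unfolding spectrum_def by auto
  then have "norm e / c \<le> spectral_radius A"
    using c by (simp add: norm_divide)
  with e(2) c show "spectral_radius (of_real c \<cdot>\<^sub>m A) \<le> c * spectral_radius A"
    by (simp add: divide_le_eq mult.commute)
next
  obtain e where e: "eigenvalue A e" "norm e = spectral_radius A"
    using spectral_radius_mem_max(1)[OF A n] unfolding spectrum_def by auto
  have "eigenvalue (of_real c \<cdot>\<^sub>m A) (of_real c * e)"
    by (rule eigenvalue_smult[OF A e(1)])
  then have "norm (of_real c * e) \<le> spectral_radius (of_real c \<cdot>\<^sub>m A)"
    using spectral_radius_mem_max(2)[of "of_real c \<cdot>\<^sub>m A" n] A n unfolding spectrum_def by auto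
  then show "c * spectral_radius A \<le> spectral_radius (of_real c \<cdot>\<^sub>m A)"
    using c e(2) by (simp add: norm_mult)
qed

lemma eigenvalue_norm_le_1_if_pow_bounded:
  assumes A: "A \<in> carrier_mat n n" and bound: "\<And>k. norm_bound (A ^\<^sub>m k) C"
    and e: "eigenvalue A e"
  shows "norm e \<le> 1"
proof (rule ccontr)
  assume "\<not> norm e \<le> 1"
  obtain v where v: "eigenvector A v e" using e unfolding eigenvalue_def by auto
  have vc: "v \<in> carrier_vec n" and "v \<noteq> 0\<^sub>v n"
    using v A unfolding eigenvector_def by auto
  then obtain i where i: "i < n" and vi: "v $ i \<noteq> 0"
    by (metis carrier_vecD eq_vecI index_zero_vec)
  have "norm e ^ k * norm (v $ i) \<le> C * (\<Sum>l<n. norm (v $ l))" for k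
  proof -
    have Ak: "A ^\<^sub>m k \<in> carrier_mat n n" using A by simp
    have "norm e ^ k * norm (v $ i) = norm ((A ^\<^sub>m k *\<^sub>v v) $ i)"
      using eigenvector_pow[OF A v, of k] i vc by (simp add: norm_mult norm_power)
    also have "(A ^\<^sub>m k *\<^sub>v v) $ i = (\<Sum>l<n. (A ^\<^sub>m k) $$ (i, l) * v $ l)"
      using i Ak vc by (subst index_mult_mat_vec) (auto simp: scalar_prod_def lessThan_atLeast0 row_def)
    also have "norm \<dots> \<le> (\<Sum>l<n. norm ((A ^\<^sub>m k) $$ (i, l)) * norm (v $ l))"
      by (rule order_trans[OF norm_sum]) (simp add: norm_mult)
    also have "\<dots> \<le> (\<Sum>l<n. C * norm (v $ l))"
      using bound[of k] A i unfolding norm_bound_def by (intro sum_mono mult_right_mono) auto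
    finally show ?thesis by (simp add: sum_distrib_left)
  qed
  then have "norm e ^ k \<le> C * (\<Sum>l<n. norm (v $ l)) / norm (v $ i)" for k
    using vi by (simp add: le_divide_eq)
  moreover obtain k where "C * (\<Sum>l<n. norm (v $ l)) / norm (v $ i) < norm e ^ k"
    using real_arch_pow \<open>\<not> norm e \<le> 1\<close> by (meson not_le)
  ultimately show False by (meson not_le)
qed

(* Rescale so that B has spectral radius below 1: then the powers of B, hence those of A,
   stay bounded, which forces every eigenvalue of the rescaled A into the unit disc. *)
lemma spectral_radius_mono:
  assumes A: "A \<in> carrier_mat n n" and B: "B \<in> carrier_mat n n" and n: "0 < n"
    and AB: "entrywise_dominated n A B"
  shows "spectral_radius A \<le> spectral_radius B"
proof (rule ccontr)
  assume "\<not> ?thesis"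
  moreover have "0 \<le> spectral_radius B"
    using spectral_radius_mem_max(1)[OF B n] by auto
  ultimately obtain r where r: "0 < r" "spectral_radius B < r" "r < spectral_radius A"
    by (metis dense le_less_trans not_le)
  define A' B' where "A' = of_real (1 / r) \<cdot>\<^sub>m A" and "B' = of_real (1 / r) \<cdot>\<^sub>m B"
  have A': "A' \<in> carrier_mat n n" and B': "B' \<in> carrier_mat n n"
    using A B unfolding A'_def B'_def by auto
  have "spectral_radius B' < 1"
    using r spectral_radius_smult[OF B n, of "1 / r"] unfolding B'_def by simp
  then obtain C where C: "norm_bound (B' ^\<^sub>m k) C" for k
    using spectral_radius_jnf_norm_bound_less_1_upper_triangular[OF B'] by auto
  have "norm_bound (A' ^\<^sub>m k) C" for k
  proof (rule norm_boundI)
    fix i j assume "i < dim_row (A' ^\<^sub>m k)" "j < dim_col (A' ^\<^sub>m k)"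
    then have ij: "i < n" "j < n" using A' by (auto split: if_splits)
    have "entrywise_dominated n (A' ^\<^sub>m k) (B' ^\<^sub>m k)"
      using r entrywise_dominated_smult[OF A B AB, of "1 / r"] A B
      unfolding A'_def B'_def by (intro entrywise_dominated_pow) auto
    then have "norm ((A' ^\<^sub>m k) $$ (i, j)) \<le> norm ((B' ^\<^sub>m k) $$ (i, j))"
      using ij complex_Re_le_cmod order_trans unfolding entrywise_dominated_def by blast
    also have "\<dots> \<le> C" using C[of k] B' ij unfolding norm_bound_def by auto
    finally show "norm ((A' ^\<^sub>m k) $$ (i, j)) \<le> C" .
  qed
  moreover obtain e where "eigenvalue A' e" "norm e = spectral_radius A'"
    using spectral_radius_mem_max(1)[OF A' n] unfolding spectrum_def by auto
  ultimately have "spectral_radius A' \<le> 1"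
    using eigenvalue_norm_le_1_if_pow_bounded[OF A'] by metis
  moreover have "spectral_radius A' = spectral_radius A / r"
    using r spectral_radius_smult[OF A n, of "1 / r"] unfolding A'_def by simp
  ultimately show False using r by (simp add: divide_le_eq)
qed

lemma spectral_radius_one_plus_le:
  assumes M: "M \<in> carrier_mat n n" and n: "0 < n"
  shows "spectral_radius (1\<^sub>m n + M) \<le> 1 + spectral_radius M"
proof -
  have IM: "1\<^sub>m n + M \<in> carrier_mat n n" using M by simp
  obtain e v where v: "eigenvector (1\<^sub>m n + M) v e" and e: "norm e = spectral_radius (1\<^sub>m n + M)"
    using spectral_radius_mem_max(1)[OF IM n] unfolding spectrum_def eigenvalue_def by auto
  have vc: "v \<in> carrier_vec n" and vz: "v \<noteq> 0\<^sub>v n" and Ev: "(1\<^sub>m n + M) *\<^sub>v v = e \<cdot>\<^sub>v v"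
    using v IM unfolding eigenvector_def by auto
  have "M *\<^sub>v v = (e - 1) \<cdot>\<^sub>v v"
  proof (rule eq_vecI)
    fix i assume "i < dim_vec ((e - 1) \<cdot>\<^sub>v v)"
    then have i: "i < n" using vc by simp
    have "v + M *\<^sub>v v = e \<cdot>\<^sub>v v"
      using Ev add_mult_distrib_mat_vec[OF one_carrier_mat M vc] vc by simp
    then have "v $ i + (M *\<^sub>v v) $ i = e * v $ i"
      using i vc M by (metis carrier_matD(1) carrier_vecD dim_mult_mat_vec index_add_vec(1) index_smult_vec(1))
    then show "(M *\<^sub>v v) $ i = ((e - 1) \<cdot>\<^sub>v v) $ i" using i vc by (simp add: algebra_simps)
  qed (use vc M in simp)
  then have "norm (e - 1) \<le> spectral_radius M"
    using vc vz M spectral_radius_mem_max(2)[OF M n]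
    unfolding spectrum_def eigenvalue_def eigenvector_def by auto
  moreover have "norm e \<le> 1 + norm (e - 1)" using norm_triangle_ineq[of 1 "e - 1"] by simp
  ultimately show ?thesis using e by simp
qed

lemma sorted_list_of_set_nth_mem:
  assumes "finite V" "k < card V"
  shows "sorted_list_of_set V ! k \<in> V"
  using assms by (metis nth_mem set_sorted_list_of_set sorted_list_of_set.length_sorted_key_list_of_set)

lemma spec_rad_mono:
  assumes V: "finite V" and ab: "\<And>i j. i \<in> V \<Longrightarrow> j \<in> V \<Longrightarrow> \<bar>a i j\<bar> \<le> b i j"
  shows "spec_rad V a \<le> spec_rad V b"
proof (cases "V = {}")
  case False
  then have "0 < card V" using V by (simp add: card_gt_0_iff)
  moreover have "entrywise_dominated (card V) (to_mat V a) (to_mat V b)"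
    using ab sorted_list_of_set_nth_mem[OF V] unfolding entrywise_dominated_def to_mat_def by simp
  moreover have "to_mat V a \<in> carrier_mat (card V) (card V)" "to_mat V b \<in> carrier_mat (card V) (card V)"
    unfolding to_mat_def by simp_all
  ultimately show ?thesis
    using False spectral_radius_mono unfolding spec_rad_def by simp
qed (simp add: spec_rad_def)

lemma spec_rad_one_plus_le:
  assumes V: "finite V"
  shows "spec_rad V (\<lambda>i j. (if i = j then 1 else 0) + b i j) \<le> 1 + spec_rad V b"
proof (cases "V = {}")
  case False
  define n where "n = card V"
  have n: "0 < n" using False V unfolding n_def by (simp add: card_gt_0_iff)
  have "to_mat V (\<lambda>i j. (if i = j then 1 else 0) + b i j) = 1\<^sub>m n + to_mat V b"
    using V by (auto intro!: eq_matI simp: to_mat_def n_def nth_eq_iff_index_eq)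
  moreover have "to_mat V b \<in> carrier_mat n n" unfolding to_mat_def n_def by simp
  ultimately show ?thesis
    using False spectral_radius_one_plus_le n unfolding spec_rad_def by simp
qed (simp add: spec_rad_def)

lemma finite_cube: "finite V \<Longrightarrow> finite (cube V)"
  unfolding cube_def by (simp add: finite_PiE)

lemma cube_coord: "\<sigma> \<in> cube V \<Longrightarrow> i \<in> V \<Longrightarrow> \<sigma> i = 1 \<or> \<sigma> i = -1"
  unfolding cube_def by (auto simp: PiE_iff)

lemma restrict_singleton_eq_pt_iff: "restrict \<sigma> {j} = pt j z \<longleftrightarrow> \<sigma> j = z"
  unfolding pt_def by (auto simp: restrict_def fun_eq_iff)

lemma pt_in_cube: "z \<in> {-1, 1} \<Longrightarrow> pt j z \<in> cube {j}"
  unfolding pt_def cube_def by auto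

lemma marg1_eq_sum: "marg1 W \<nu> j z = (\<Sum>\<sigma>\<in>cube W. if \<sigma> j = z then \<nu> \<sigma> else 0)"
  unfolding marg1_def marg_def restrict_singleton_eq_pt_iff ..

lemma bij_betw_merge:
  assumes "\<Lambda> \<subseteq> V" "\<tau> \<in> cube \<Lambda>"
  shows "bij_betw (merge \<Lambda> \<tau>) (cube (V - \<Lambda>)) {\<sigma> \<in> cube V. restrict \<sigma> \<Lambda> = \<tau>}"
proof (rule bij_betw_byWitness[where f' = "\<lambda>\<sigma>. restrict \<sigma> (V - \<Lambda>)"])
  show "\<forall>\<rho>\<in>cube (V - \<Lambda>). restrict (merge \<Lambda> \<tau> \<rho>) (V - \<Lambda>) = \<rho>"
    by (auto simp: cube_def merge_def restrict_def PiE_iff extensional_def fun_eq_iff)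
  show "\<forall>\<sigma>\<in>{\<sigma> \<in> cube V. restrict \<sigma> \<Lambda> = \<tau>}. merge \<Lambda> \<tau> (restrict \<sigma> (V - \<Lambda>)) = \<sigma>"
    using assms by (auto simp: cube_def merge_def restrict_def PiE_iff extensional_def fun_eq_iff)
  show "merge \<Lambda> \<tau> ` cube (V - \<Lambda>) \<subseteq> {\<sigma> \<in> cube V. restrict \<sigma> \<Lambda> = \<tau>}"
    using assms by (auto simp: cube_def merge_def restrict_def PiE_iff extensional_def fun_eq_iff; blast)
  show "(\<lambda>\<sigma>. restrict \<sigma> (V - \<Lambda>)) ` {\<sigma> \<in> cube V. restrict \<sigma> \<Lambda> = \<tau>} \<subseteq> cube (V - \<Lambda>)"
    by (auto simp: cube_def PiE_iff extensional_def split: if_splits)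
qed

lemma sum_cube_merge:
  assumes "\<Lambda> \<subseteq> V" "\<tau> \<in> cube \<Lambda>" "finite V"
  shows "(\<Sum>\<rho>\<in>cube (V - \<Lambda>). f (merge \<Lambda> \<tau> \<rho>)) = (\<Sum>\<sigma>\<in>cube V. if restrict \<sigma> \<Lambda> = \<tau> then f \<sigma> else 0)"
proof -
  have "(\<Sum>\<rho>\<in>cube (V - \<Lambda>). f (merge \<Lambda> \<tau> \<rho>)) = (\<Sum>\<sigma>\<in>{\<sigma> \<in> cube V. restrict \<sigma> \<Lambda> = \<tau>}. f \<sigma>)"
    using sum.reindex_bij_betw[OF bij_betw_merge[OF assms(1,2)]] .
  also have "\<dots> = (\<Sum>\<sigma>\<in>cube V. if restrict \<sigma> \<Lambda> = \<tau> then f \<sigma> else 0)"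
    using finite_cube[OF assms(3)] by (simp add: sum.inter_filter)
  finally show ?thesis .
qed

lemma is_dist_cond:
  assumes d: "is_dist V \<nu>" and V: "finite V" and \<Lambda>: "\<Lambda> \<subseteq> V" and \<tau>: "\<tau> \<in> cube \<Lambda>"
    and pos: "0 < marg V \<nu> \<Lambda> \<tau>"
  shows "is_dist (V - \<Lambda>) (cond V \<nu> \<Lambda> \<tau>)"
proof -
  have "\<forall>\<rho>\<in>cube (V - \<Lambda>). 0 \<le> cond V \<nu> \<Lambda> \<tau> \<rho>"
    using d pos bij_betw_apply[OF bij_betw_merge[OF \<Lambda> \<tau>]]
    unfolding is_dist_def cond_def by auto
  moreover have "(\<Sum>\<rho>\<in>cube (V - \<Lambda>). \<nu> (merge \<Lambda> \<tau> \<rho>)) = marg V \<nu> \<Lambda> \<tau>"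
    unfolding sum_cube_merge[OF \<Lambda> \<tau> V] marg_def ..
  then have "(\<Sum>\<rho>\<in>cube (V - \<Lambda>). cond V \<nu> \<Lambda> \<tau> \<rho>) = 1"
    using pos unfolding cond_def by (simp add: sum_divide_distrib[symmetric])
  ultimately show ?thesis unfolding is_dist_def by auto
qed

lemma is_dist_tilt:
  assumes d: "is_dist V \<mu>" and V: "finite V" and lam: "\<forall>i\<in>V. 0 < lam i"
  shows "is_dist V (tilt V lam \<mu>)"
proof -
  define P where "P = (\<lambda>\<sigma>::nat \<Rightarrow> int. \<Prod>i\<in>{i\<in>V. \<sigma> i = 1}. lam i)"
  define Z where "Z = (\<Sum>\<sigma>\<in>cube V. \<mu> \<sigma> * P \<sigma>)"
  have P: "0 < P \<sigma>" for \<sigma> unfolding P_def using lam by (intro prod_pos) auto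
  obtain \<sigma>0 where \<sigma>0: "\<sigma>0 \<in> cube V" "0 < \<mu> \<sigma>0"
  proof (rule ccontr)
    assume "\<not> thesis"
    then have "(\<Sum>\<sigma>\<in>cube V. \<mu> \<sigma>) \<le> 0" using that by (intro sum_nonpos) force
    then show False using d unfolding is_dist_def by simp
  qed
  have "0 < Z" unfolding Z_def
    using d P \<sigma>0 finite_cube[OF V] unfolding is_dist_def
    by (intro sum_pos2[of _ \<sigma>0]) (auto intro: mult_nonneg_nonneg less_imp_le)
  moreover have "tilt V lam \<mu> = (\<lambda>\<sigma>. \<mu> \<sigma> * P \<sigma> / Z)" unfolding tilt_def P_def Z_def ..
  ultimately show ?thesis
    using d P by (auto simp: is_dist_def sum_divide_distrib[symmetric] Z_def less_imp_le)
qed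

definition marg2 :: "nat set \<Rightarrow> ((nat \<Rightarrow> int) \<Rightarrow> real) \<Rightarrow> nat \<Rightarrow> nat \<Rightarrow> int \<Rightarrow> int \<Rightarrow> real" where
  "marg2 W \<nu> i j x z = (\<Sum>\<sigma>\<in>cube W. if \<sigma> i = x \<and> \<sigma> j = z then \<nu> \<sigma> else 0)"

lemma marg1_nonneg: "is_dist W \<nu> \<Longrightarrow> 0 \<le> marg1 W \<nu> i x"
  unfolding marg1_eq_sum is_dist_def by (intro sum_nonneg) auto

lemma marg2_nonneg: "is_dist W \<nu> \<Longrightarrow> 0 \<le> marg2 W \<nu> i j x z"
  unfolding marg2_def is_dist_def by (intro sum_nonneg) auto

lemma marg2_le_marg1: "is_dist W \<nu> \<Longrightarrow> marg2 W \<nu> i j x z \<le> marg1 W \<nu> i x"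
  unfolding marg2_def marg1_eq_sum is_dist_def by (intro sum_mono) auto

lemma marg1_plus_minus:
  assumes "is_dist W \<nu>" and "i \<in> W"
  shows "marg1 W \<nu> i 1 + marg1 W \<nu> i (-1) = 1"
proof -
  have "marg1 W \<nu> i 1 + marg1 W \<nu> i (-1) = (\<Sum>\<sigma>\<in>cube W. \<nu> \<sigma>)"
    unfolding marg1_eq_sum sum.distrib[symmetric]
    by (intro sum.cong) (use cube_coord[OF _ assms(2)] in auto)
  then show ?thesis using assms(1) unfolding is_dist_def by simp
qed

lemma marg1_eq_marg2_plus_minus:
  assumes "i \<in> W"
  shows "marg1 W \<nu> j z = marg2 W \<nu> i j 1 z + marg2 W \<nu> i j (-1) z"
  unfolding marg1_eq_sum marg2_def sum.distrib[symmetric]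
  by (intro sum.cong) (use cube_coord[OF _ assms] in auto)

lemma marg1_cond1:
  assumes W: "finite W" and i: "i \<in> W" and ij: "i \<noteq> j" and x: "x \<in> {-1, 1}"
  shows "marg1 (W - {i}) (cond1 W \<nu> i x) j z = marg2 W \<nu> i j x z / marg1 W \<nu> i x"
proof -
  define g where "g = (\<lambda>\<sigma>::nat \<Rightarrow> int. if \<sigma> j = z then \<nu> \<sigma> else 0)"
  have merge_j: "merge {i} (pt i x) \<rho> j = \<rho> j" for \<rho> using ij unfolding merge_def by simp
  have "marg1 (W - {i}) (cond1 W \<nu> i x) j z
      = (\<Sum>\<rho>\<in>cube (W - {i}). g (merge {i} (pt i x) \<rho>)) / marg1 W \<nu> i x"
    unfolding marg1_eq_sum[of "W - {i}"] cond1_def cond_def marg1_def[symmetric] g_def merge_j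
    by (auto simp: sum_divide_distrib intro!: sum.cong)
  also have "(\<Sum>\<rho>\<in>cube (W - {i}). g (merge {i} (pt i x) \<rho>))
      = (\<Sum>\<sigma>\<in>cube W. if restrict \<sigma> {i} = pt i x then g \<sigma> else 0)"
    using i by (intro sum_cube_merge[OF _ pt_in_cube[OF x] W]) auto
  also have "\<dots> = marg2 W \<nu> i j x z"
    unfolding marg2_def restrict_singleton_eq_pt_iff g_def by (intro sum.cong) auto
  finally show ?thesis .
qed

lemma is_dist_cond1:
  assumes "is_dist W \<nu>" "finite W" "i \<in> W" "x \<in> supp1 W \<nu> i"
  shows "is_dist (W - {i}) (cond1 W \<nu> i x)"
  using is_dist_cond[OF assms(1,2), of "{i}" "pt i x"] assms(3,4) pt_in_cube[of x i]
  unfolding cond1_def supp1_def marg1_def by auto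

lemma marg1_total_probability:
  assumes W: "finite W" and i: "i \<in> W" and ij: "i \<noteq> j"
    and supp: "1 \<in> supp1 W \<nu> i" "-1 \<in> supp1 W \<nu> i"
  shows "marg1 W \<nu> j z = marg1 W \<nu> i 1 * marg1 (W - {i}) (cond1 W \<nu> i 1) j z
                        + marg1 W \<nu> i (-1) * marg1 (W - {i}) (cond1 W \<nu> i (-1)) j z"
  using supp marg1_eq_marg2_plus_minus[OF i, of \<nu> j z] marg1_cond1[OF W i ij]
  unfolding supp1_def by simp

lemma dtv_j_eq_abs_diff:
  assumes d: "is_dist W \<nu>" and W: "finite W" and i: "i \<in> W" and j: "j \<in> W" and ij: "i \<noteq> j"
    and x: "x \<in> supp1 W \<nu> i" and y: "y \<in> supp1 W \<nu> i"
  shows "dtv_j W \<nu> i x y j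
           = \<bar>marg1 (W - {i}) (cond1 W \<nu> i x) j 1 - marg1 (W - {i}) (cond1 W \<nu> i y) j 1\<bar>"
proof -
  have j': "j \<in> W - {i}" using i j ij by simp
  have "marg1 (W - {i}) (cond1 W \<nu> i u) j (-1) = 1 - marg1 (W - {i}) (cond1 W \<nu> i u) j 1"
    if "u \<in> supp1 W \<nu> i" for u
    using marg1_plus_minus[OF is_dist_cond1[OF d W i that] j'] by simp
  then show ?thesis using x y unfolding dtv_j_def by simp
qed

lemma cor_eq_scaled_cond_diff:
  assumes d: "is_dist W \<nu>" and W: "finite W" and i: "i \<in> W" and ij: "i \<noteq> j"
    and supp: "1 \<in> supp1 W \<nu> i" "-1 \<in> supp1 W \<nu> i"
  shows "cor W \<nu> i j = marg1 W \<nu> i (-1)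
           * (marg1 (W - {i}) (cond1 W \<nu> i 1) j 1 - marg1 (W - {i}) (cond1 W \<nu> i (-1)) j 1)"
proof -
  have p: "marg1 W \<nu> i 1 = 1 - marg1 W \<nu> i (-1)" using marg1_plus_minus[OF d i] by simp
  show ?thesis
    using supp ij marg1_total_probability[OF W i ij supp, of 1]
    unfolding cor_def p by (simp add: algebra_simps)
qed

lemma cor_eq_0_if_degenerate:
  assumes d: "is_dist W \<nu>" and W: "finite W" and i: "i \<in> W" and ij: "i \<noteq> j"
    and degenerate: "1 \<notin> supp1 W \<nu> i \<or> -1 \<notin> supp1 W \<nu> i"
  shows "cor W \<nu> i j = 0"
proof (cases "1 \<in> supp1 W \<nu> i")
  case True
  then have "\<not> 0 < marg1 W \<nu> i (-1)" using degenerate unfolding supp1_def by simp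
  then have q: "marg1 W \<nu> i (-1) = 0" using marg1_nonneg[OF d, of i "-1"] by linarith
  then have p: "marg1 W \<nu> i 1 = 1" using marg1_plus_minus[OF d i] by simp
  have "marg2 W \<nu> i j (-1) 1 = 0"
    using marg2_nonneg[OF d] marg2_le_marg1[OF d, of i j "-1" 1] q by (simp add: order.antisym)
  then have "marg1 W \<nu> j 1 = marg2 W \<nu> i j 1 1"
    using marg1_eq_marg2_plus_minus[OF i, of \<nu> j 1] by simp
  moreover have "marg1 (W - {i}) (cond1 W \<nu> i 1) j 1 = marg2 W \<nu> i j 1 1"
    using marg1_cond1[OF W i ij, of 1 \<nu> 1] p by simp
  ultimately show ?thesis using True ij unfolding cor_def by simp
qed (use ij in \<open>simp add: cor_def\<close>)

lemma supp1_nonempty: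
  assumes "is_dist W \<nu>" "i \<in> W"
  shows "supp1 W \<nu> i \<noteq> {}"
proof -
  have "0 < marg1 W \<nu> i 1 \<or> 0 < marg1 W \<nu> i (-1)" using marg1_plus_minus[OF assms] by linarith
  then show ?thesis unfolding supp1_def by auto
qed

lemma dtv_j_le_infl:
  assumes "i \<noteq> j" "x \<in> supp1 W \<nu> i" "y \<in> supp1 W \<nu> i"
  shows "dtv_j W \<nu> i x y j \<le> infl W \<nu> i j"
proof -
  have "finite (supp1 W \<nu> i)" unfolding supp1_def by simp
  then have "finite {dtv_j W \<nu> i x y j | x y. x \<in> supp1 W \<nu> i \<and> y \<in> supp1 W \<nu> i}"
    by (simp add: finite_image_set2)
  then show ?thesis using assms unfolding infl_def by (auto intro: Max_ge)
qed

lemma infl_nonneg: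
  assumes "is_dist W \<nu>" "i \<in> W"
  shows "0 \<le> infl W \<nu> i j"
proof (cases "i = j")
  case False
  obtain x where "x \<in> supp1 W \<nu> i" using supp1_nonempty[OF assms] by blast
  moreover have "0 \<le> dtv_j W \<nu> i x x j" unfolding dtv_j_def by simp
  ultimately show ?thesis using dtv_j_le_infl[OF False] by (meson order_trans)
qed (simp add: infl_def)

lemma abs_cor_le_infl:
  assumes d: "is_dist W \<nu>" and W: "finite W" and i: "i \<in> W" and j: "j \<in> W" and ij: "i \<noteq> j"
  shows "\<bar>cor W \<nu> i j\<bar> \<le> infl W \<nu> i j"
proof (cases "1 \<in> supp1 W \<nu> i \<and> -1 \<in> supp1 W \<nu> i")
  case True
  then have "\<bar>cor W \<nu> i j\<bar> = marg1 W \<nu> i (-1) * dtv_j W \<nu> i 1 (-1) j"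
    using cor_eq_scaled_cond_diff[OF d W i ij] dtv_j_eq_abs_diff[OF d W i j ij]
      marg1_nonneg[OF d] by (simp add: abs_mult)
  also have "\<dots> \<le> dtv_j W \<nu> i 1 (-1) j"
    using marg1_plus_minus[OF d i] marg1_nonneg[OF d, of i 1] marg1_nonneg[OF d, of i "-1"]
    by (intro mult_left_le_one_le) (auto simp: dtv_j_def)
  also have "\<dots> \<le> infl W \<nu> i j" using True ij by (simp add: dtv_j_le_infl)
  finally show ?thesis .
next
  case False
  then show ?thesis using cor_eq_0_if_degenerate[OF d W i ij] infl_nonneg[OF d i] by simp
qed

lemma abscor_le_1_plus_infl:
  assumes d: "is_dist W \<nu>" and W: "finite W" and i: "i \<in> W" and j: "j \<in> W"
  shows "abscor W \<nu> i j \<le> (if i = j then 1 else 0) + infl W \<nu> i j"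
proof (cases "i = j")
  case True
  then show ?thesis
    using marg1_plus_minus[OF d i] marg1_nonneg[OF d, of i 1] marg1_nonneg[OF d, of i "-1"]
    unfolding abscor_def cor_def infl_def by simp
qed (simp add: abscor_def abs_cor_le_infl[OF assms])

theorem lemma6p6:
  fixes n :: nat and \<eta> \<epsilon> :: real and \<mu> :: "(nat \<Rightarrow> int) \<Rightarrow> real"
  assumes "0 < \<eta>" and "0 < \<epsilon>"
    and "is_dist {0..<n} \<mu>"
    and "completely_SI \<eta> \<epsilon> {0..<n} \<mu>"
  shows "complete_limited_correlation (\<eta> + 1) \<epsilon> {0..<n} \<mu>"
  unfolding complete_limited_correlation_def limited_correlation_def
proof (intro allI impI ballI)
  fix lam \<Lambda> \<tau>
  assume lam: "\<forall>i\<in>{0..<n}. 0 < lam i \<and> lam i \<le> 1 + \<epsilon>" and \<Lambda>: "\<Lambda> \<subseteq> {0..<n}"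
    and \<tau>: "\<tau> \<in> cube \<Lambda>" and pos: "0 < marg {0..<n} (tilt {0..<n} lam \<mu>) \<Lambda> \<tau>"
  define W where "W = {0..<n} - \<Lambda>"
  define \<nu> where "\<nu> = cond {0..<n} (tilt {0..<n} lam \<mu>) \<Lambda> \<tau>"
  have W: "finite W" unfolding W_def by simp
  have d: "is_dist W \<nu>"
    unfolding W_def \<nu>_def using is_dist_tilt[OF assms(3)] lam \<Lambda> \<tau> pos
    by (intro is_dist_cond) auto
  have "spec_rad W (abscor W \<nu>) \<le> spec_rad W (\<lambda>i j. (if i = j then 1 else 0) + infl W \<nu> i j)"
    using abscor_le_1_plus_infl[OF d W] by (intro spec_rad_mono[OF W]) (simp add: abscor_def)
  also have "\<dots> \<le> 1 + spec_rad W (infl W \<nu>)"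
    by (rule spec_rad_one_plus_le[OF W])
  also have "spec_rad W (infl W \<nu>) \<le> \<eta>"
    using assms(4) lam \<Lambda> \<tau> pos unfolding completely_SI_def spectrally_independent_def W_def \<nu>_def
    by blast
  finally show "spec_rad ({0..<n} - \<Lambda>) (abscor ({0..<n} - \<Lambda>) \<nu>) \<le> \<eta> + 1"
    unfolding W_def by simp
qed

end
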